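(* Let $M_t\ge 1$, $\nu\ge 0$, $d\in\{1,\dots,M_t\}$ be integers and set $R=M_t-d+1$. If $T\ge (2^R-1)\nu+(2^R-1)(\nu+1)\big((M_t-2)(2^R-1)+R\big)$, then there exists a set $\mathcal{P}_{\nu,d}$ of binary matrices $\mathbf{B}\in\mathbb{F}_2^{M_t\times T}$, each having its last $\nu$ columns equal to zero, such that (1) for every pair of distinct $\mathbf{A},\mathbf{B}\in\mathcal{P}_{\nu,d}$, $\operatorname{rank}_{\mathbb{F}_2}\big(\Theta(\mathbf{A})-\Theta(\mathbf{B})\big)\ge d(\nu+1)$, and (2) $\log_2|\mathcal{P}_{\nu,d}|\ge R\big(T-\nu-(\nu+1)(M_t-1)(2^R-1)2^{R-1}\big)$.
   Context: For $\mathbf{B}=[\mathbf{c}[0],\dots,\mathbf{c}[T-\nu-1],\mathbf{0},\dots,\mathbf{0}]\in\mathbb{F}_2^{M_t\times T}$ (last $\nu$ columns zero), $\Theta(\mathbf{B})\in\mathbb{F}_2^{(\nu+1)M_t\times T}$ is the block-Toeplitz matrix with $\nu+1$ block rows, block row $i$ ($i=0,\dots,\nu$) being $\mathbf{B}$ with its columns shifted right by $i$ positions, i.e. $[\mathbf{0},\dots,\mathbf{0},\mathbf{c}[0],\dots,\mathbf{c}[T-\nu-1],\mathbf{0},\dots,\mathbf{0}]$ with $i$ leading and $\nu-i$ trailing zero columns. *)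

theory Defs
  imports Complex_Main "HOL-Library.Z2" "Jordan_Normal_Form.DL_Rank"
begin

definition rank_F2 :: "bit mat \<Rightarrow> nat" where
  "rank_F2 A = vec_space.rank (dim_row A) A"

text \<open>Block-Toeplitz matrix Theta(B) with nu+1 block rows; block row i is B with its
  columns shifted right by i positions (zero columns entering on the left).\<close>
definition Theta :: "nat \<Rightarrow> bit mat \<Rightarrow> bit mat" where
  "Theta nu B = mat ((nu + 1) * dim_row B) (dim_col B)
     (\<lambda>(r, j). if r div dim_row B \<le> j
               then B $$ (r mod dim_row B, j - r div dim_row B) else 0)"

end

theory Submission
  imports Defs
begin

text \<open>Row m of a codeword is the sum of R binary messages h j of length N, the j-th one delayed
  by m (nu + 1) (j + 1) positions; N is as large as the nu trailing zero columns allow, and the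
  code is linear with 2 ^ (R N) words. For a nonzero difference of codewords let delta j be the
  last nonzero position of h j. Row m then ends at the upper envelope of the lines
  m * (nu + 1) (j + 1) + delta j, unless two lines tie for the maximum there. Since the slopes are
  distinct, ties occur at no more than R - 1 values of m, and the envelope grows by more than nu
  from row to row. Hence at least Mt + 1 - R = d rows end at well separated columns, and their
  nu + 1 shifted copies in Theta end at pairwise distinct columns, so they are linearly
  independent.\<close>

lemma rank_ge_card_pivots:
  fixes A :: "'a::field mat" and row piv :: "'b \<Rightarrow> nat"
  assumes A: "A \<in> carrier_mat n nc"
    and row: "\<forall>r\<in>G. row r < n" and piv: "\<forall>r\<in>G. piv r < nc" and piv_inj: "inj_on piv G"
    and pivot: "\<forall>r\<in>G. A $$ (row r, piv r) \<noteq> 0"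
    and right_of_pivot: "\<forall>r\<in>G. \<forall>r'\<in>G. piv r < piv r' \<longrightarrow> A $$ (row r, piv r') = 0"
  shows "card G \<le> vec_space.rank n A"
proof -
  interpret vec_space "TYPE('a)" n .
  define U where "U = (\<lambda>r. col A (piv r)) ` G"
  have finG: "finite G"
    using finite_imageD[OF finite_subset[of "piv ` G" "{..<nc}"] piv_inj] piv by auto
  have col_entry: "col A (piv r') $ row r = A $$ (row r, piv r')" if "r \<in> G" "r' \<in> G" for r r'
    using A row piv that by auto
  have col_inj: "inj_on (\<lambda>r. col A (piv r)) G"
  proof (rule inj_onI, rule ccontr)
    fix r r' assume G: "r \<in> G" "r' \<in> G" and eq: "col A (piv r) = col A (piv r')" and "r \<noteq> r'"
    then have "piv r < piv r' \<or> piv r' < piv r"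
      using piv_inj by (metis inj_onD linorder_neq_iff)
    then show False
      using col_entry[of r r] col_entry[of r r'] col_entry[of r' r] col_entry[of r' r']
        eq G pivot right_of_pivot by metis
  qed
  have U_cols: "U \<subseteq> set (cols A)"
    unfolding U_def using A piv by (auto simp: cols_def)
  then have U_carrier: "U \<subseteq> carrier_vec n" using A cols_dim by blast
  have "lin_indpt U"
  proof
    assume "lin_dep U"
    then obtain a v where lc: "lincomb a U = \<zero>\<^bsub>V\<^esub>" and "v \<in> U" and "a v \<noteq> 0"
      using finite_lin_dep[of U] U_carrier finG unfolding U_def by auto
    define S where "S = {r\<in>G. a (col A (piv r)) \<noteq> 0}"
    have "S \<noteq> {}" using \<open>v \<in> U\<close> \<open>a v \<noteq> 0\<close> unfolding S_def U_def by auto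
    \<comment> \<open>in row r0 only the column with the leftmost pivot among those with nonzero coefficient
      contributes\<close>
    then obtain r0 where r0: "r0 \<in> S" and least: "\<forall>r\<in>S. piv r0 \<le> piv r"
      using ex_has_least_nat[of "\<lambda>r. r \<in> S" _ piv] by blast
    have r0G: "r0 \<in> G" using r0 S_def by simp
    define f where "f r = a (col A (piv r)) * A $$ (row r0, piv r)" for r
    have "lincomb a U $ row r0 = (\<Sum>r\<in>G. f r)"
      using lincomb_index[of "row r0" U a] U_carrier row r0G col_entry[OF r0G]
      by (simp add: U_def sum.reindex[OF col_inj] f_def)
    also have "\<dots> = f r0 + (\<Sum>r\<in>G-{r0}. f r)" by (rule sum.remove[OF finG r0G])
    also have "(\<Sum>r\<in>G-{r0}. f r) = 0"
    proof (rule sum.neutral, rule ballI)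
      fix r assume r: "r \<in> G - {r0}"
      have "a (col A (piv r)) \<noteq> 0 \<Longrightarrow> piv r0 < piv r"
        using least r r0G piv_inj unfolding S_def by (fastforce simp: inj_on_eq_iff le_less)
      then show "f r = 0" using right_of_pivot r r0G unfolding f_def by auto
    qed
    finally have "lincomb a U $ row r0 = f r0" by simp
    moreover have "lincomb a U $ row r0 = 0" using lc row r0G by simp
    ultimately show False using r0 pivot r0G unfolding S_def f_def by simp
  qed
  then have "card U \<le> rank A" using rank_ge_card_indpt[OF A U_cols] by simp
  then show ?thesis using card_image[OF col_inj] unfolding U_def by simp
qed

lemma Theta_carrier: "B \<in> carrier_mat Mt T \<Longrightarrow> Theta nu B \<in> carrier_mat ((nu + 1) * Mt) T"
  unfolding Theta_def by auto

lemma block_index_less: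
  fixes i m nu Mt :: nat
  assumes "i \<le> nu" and "m < Mt"
  shows "i * Mt + m < (nu + 1) * Mt"
proof -
  have "i * Mt + m < (i + 1) * Mt" using assms(2) by simp
  also have "\<dots> \<le> (nu + 1) * Mt" using assms(1) by (intro mult_right_mono) auto
  finally show ?thesis .
qed

lemma Theta_entry:
  assumes "B \<in> carrier_mat Mt T" and "i \<le> nu" and "m < Mt" and "q < T"
  shows "Theta nu B $$ (i * Mt + m, q) = (if i \<le> q then B $$ (m, q - i) else 0)"
  using block_index_less[OF assms(2,3)] assms unfolding Theta_def by auto

lemma Theta_diff:
  assumes "A \<in> carrier_mat Mt T" and "B \<in> carrier_mat Mt T"
  shows "Theta nu A - Theta nu B = Theta nu (A - B)"
proof (rule eq_matI)
  fix r j assume r: "r < dim_row (Theta nu (A - B))" and "j < dim_col (Theta nu (A - B))"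
  moreover have "r mod Mt < Mt" using r assms by (cases Mt) (auto simp: Theta_def)
  ultimately show "(Theta nu A - Theta nu B) $$ (r, j) = Theta nu (A - B) $$ (r, j)"
    using assms unfolding Theta_def by auto
qed (use assms in \<open>auto simp: Theta_def\<close>)

lemma rank_F2_zero: "rank_F2 (0\<^sub>m n m) = 0"
  unfolding rank_F2_def by (simp add: vec_space.rank_0I)

text \<open>Copy i of row m ends at column F m + i, and these columns are pairwise distinct.\<close>
lemma rank_Theta_ge:
  assumes B: "B \<in> carrier_mat Mt T" and S: "S \<subseteq> {..<Mt}"
    and last: "\<forall>m\<in>S. B $$ (m, F m) \<noteq> 0 \<and> F m + nu < T
                      \<and> (\<forall>q. F m < q \<and> q < T \<longrightarrow> B $$ (m, q) = 0)"
    and spread: "\<forall>m\<in>S. \<forall>m'\<in>S. m < m' \<longrightarrow> F m + nu < F m'"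
  shows "(nu + 1) * card S \<le> rank_F2 (Theta nu B)"
proof -
  define G where "G = {..nu} \<times> S"
  define row where "row = (\<lambda>(i, m). i * Mt + m)"
  define piv where "piv = (\<lambda>(i, m). F m + i)"
  have entry: "Theta nu B $$ (row (i, m), q) = (if i \<le> q then B $$ (m, q - i) else 0)"
    if "(i, m) \<in> G" "q < T" for i m q
    using Theta_entry[OF B] that S unfolding G_def row_def by auto
  have "card G \<le> vec_space.rank ((nu + 1) * Mt) (Theta nu B)"
  proof (rule rank_ge_card_pivots[OF Theta_carrier[OF B]])
    show "\<forall>r\<in>G. row r < (nu + 1) * Mt"
      using block_index_less S unfolding G_def row_def by auto
    show "\<forall>r\<in>G. piv r < T" using last unfolding G_def piv_def by auto
    show "inj_on piv G"
    proof (rule inj_onI, clarify)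
      fix i m i' m' assume G: "(i, m) \<in> G" "(i', m') \<in> G" and eq: "piv (i, m) = piv (i', m')"
      have "m = m'"
      proof (rule ccontr)
        assume "m \<noteq> m'"
        then show False using spread G eq unfolding G_def piv_def by (auto simp: neq_iff) fastforce+
      qed
      then show "i = i' \<and> m = m'" using eq by (simp add: piv_def)
    qed
    show "\<forall>r\<in>G. Theta nu B $$ (row r, piv r) \<noteq> 0"
      using entry last unfolding G_def piv_def by auto
    show "\<forall>r\<in>G. \<forall>r'\<in>G. piv r < piv r' \<longrightarrow> Theta nu B $$ (row r, piv r') = 0"
    proof (clarify)
      fix i m i' m' assume r: "(i, m) \<in> G" and r': "(i', m') \<in> G" and "piv (i, m) < piv (i', m')"
      then have "F m < F m' + i' - i" and "F m' + i' < T"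
        using last unfolding G_def piv_def by auto
      then show "Theta nu B $$ (row (i, m), piv (i', m')) = 0"
        using entry[OF r] last r unfolding G_def piv_def by auto
    qed
  qed
  then show ?thesis
    using Theta_carrier[OF B, where nu = nu] unfolding rank_F2_def G_def
    by (simp add: card_cartesian_product)
qed

definition delay_code ::
    "nat \<Rightarrow> nat \<Rightarrow> nat \<Rightarrow> (nat \<Rightarrow> nat) \<Rightarrow> nat \<Rightarrow> (nat \<Rightarrow> nat \<Rightarrow> bit) \<Rightarrow> bit mat" where
  "delay_code Mt T N c R h = mat Mt T (\<lambda>(m, q).
     \<Sum>j<R. if m * c j \<le> q \<and> q - m * c j < N then h j (q - m * c j) else 0)"

lemma delay_code_carrier: "delay_code Mt T N c R h \<in> carrier_mat Mt T"
  unfolding delay_code_def by simp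

lemma delay_code_diff:
  "delay_code Mt T N c R h - delay_code Mt T N c R g = delay_code Mt T N c R (\<lambda>j k. h j k - g j k)"
  by (rule eq_matI) (auto simp: delay_code_def sum_subtractf[symmetric] intro!: sum.cong
      simp del: minus_bit_def bit_not_zero_iff bit_not_one_iff)

lemma delay_code_entry_zero:
  assumes "m < Mt" and "q < T" and "\<forall>j<R. \<forall>k<N. h j k \<noteq> 0 \<longrightarrow> m * c j + k \<noteq> q"
  shows "delay_code Mt T N c R h $$ (m, q) = 0"
proof -
  have "(if m * c j \<le> q \<and> q - m * c j < N then h j (q - m * c j) else 0) = 0" if "j < R" for j
    using assms(3) that by (metis le_add_diff_inverse)
  then show ?thesis using assms(1,2) unfolding delay_code_def by (simp add: sum.neutral)
qed

lemma delay_code_entry_single: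
  assumes "m < Mt" and "m * c j1 + k1 < T" and "j1 < R" and "k1 < N"
    and "\<forall>j<R. j \<noteq> j1 \<longrightarrow> (\<forall>k<N. h j k \<noteq> 0 \<longrightarrow> m * c j + k \<noteq> m * c j1 + k1)"
  shows "delay_code Mt T N c R h $$ (m, m * c j1 + k1) = h j1 k1"
proof -
  let ?q = "m * c j1 + k1"
  have "(if m * c j \<le> ?q \<and> ?q - m * c j < N then h j (?q - m * c j) else 0)
      = (if j = j1 then h j1 k1 else 0)" if "j < R" for j
    using assms(4,5) that by (cases "j = j1") (simp, metis le_add_diff_inverse)
  then have "(\<Sum>j<R. if m * c j \<le> ?q \<and> ?q - m * c j < N then h j (?q - m * c j) else 0)
      = (\<Sum>j<R. if j = j1 then h j1 k1 else 0)" by (intro sum.cong) auto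
  then show ?thesis using assms(1-3) unfolding delay_code_def by simp
qed

lemma delay_code_last_cols_zero:
  assumes "\<forall>j<R. (Mt - 1) * c j + N + nu \<le> T" and "m < Mt" and "T - nu \<le> q" and "q < T"
  shows "delay_code Mt T N c R h $$ (m, q) = 0"
proof (rule delay_code_entry_zero[OF assms(2,4)], intro allI impI)
  fix j k assume "j < R" "k < N"
  then have "(Mt - 1) * c j + N + nu \<le> T" using assms(1) by blast
  moreover have "m * c j \<le> (Mt - 1) * c j" using assms(2) by (intro mult_right_mono) auto
  ultimately show "m * c j + k \<noteq> q" using \<open>k < N\<close> assms(3) by linarith
qed

definition envelope_ties :: "'a set \<Rightarrow> ('a \<Rightarrow> nat) \<Rightarrow> ('a \<Rightarrow> nat) \<Rightarrow> nat set" where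
  "envelope_ties J a b = {m. \<exists>j\<in>J. \<exists>k\<in>J. j \<noteq> k \<and> m * a j + b j = m * a k + b k
                                 \<and> (\<forall>i\<in>J. m * a i + b i \<le> m * a j + b j)}"

text \<open>Map a tie m to the least slope among the lines attaining the maximum at m. This slope is
  not the largest one, and it determines m: right of m the steeper maximal line overtakes it.\<close>
lemma envelope_ties_finite_card:
  assumes J: "finite J" and inj: "inj_on a J"
  shows "finite (envelope_ties J a b)" and "card (envelope_ties J a b) \<le> card J - 1"
proof -
  define maxi where "maxi m = {j\<in>J. \<forall>i\<in>J. m * a i + b i \<le> m * a j + b j}" for m
  define s where "s m = Min (a ` maxi m)" for m
  have tie: "\<exists>j\<in>maxi m. \<exists>k\<in>maxi m. a j = s m \<and> s m < a k" if m: "m \<in> envelope_ties J a b" for m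
  proof -
    obtain j k where jk: "j \<in> J" "k \<in> J" "j \<noteq> k" "m * a j + b j = m * a k + b k"
      and max: "\<forall>i\<in>J. m * a i + b i \<le> m * a j + b j"
      using m unfolding envelope_ties_def by blast
    then have maxi: "j \<in> maxi m" "k \<in> maxi m" unfolding maxi_def by auto
    have "a j \<noteq> a k" using inj_onD[OF inj] jk(1-3) by blast
    have fin: "finite (a ` maxi m)" using J unfolding maxi_def by simp
    have "s m \<in> a ` maxi m" unfolding s_def using fin maxi by (intro Min_in) auto
    then obtain j0 where j0: "j0 \<in> maxi m" "a j0 = s m" by auto
    have "s m \<le> a j" "s m \<le> a k" unfolding s_def using fin maxi by (auto intro!: Min_le)
    then have "s m < a j \<or> s m < a k" using \<open>a j \<noteq> a k\<close> by linarith
    then show ?thesis using j0 maxi by blast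
  qed
  have overtake: False
    if lt: "m < m'" and eq: "s m = s m'"
      and ties: "m \<in> envelope_ties J a b" "m' \<in> envelope_ties J a b" for m m'
  proof -
    obtain j k where j: "j \<in> maxi m" "a j = s m" and k: "k \<in> maxi m" "s m < a k"
      using tie[OF ties(1)] by blast
    obtain j' where j': "j' \<in> maxi m'" "a j' = s m'" using tie[OF ties(2)] by blast
    have "j' = j" using inj_onD[OF inj, of j' j] j j' eq unfolding maxi_def by simp
    have "m * a k + b k \<le> m * a j + b j" "m * a j + b j \<le> m * a k + b k"
      using j(1) k(1) unfolding maxi_def by blast+
    moreover have "(m' - m) * a j < (m' - m) * a k" using j(2) k(2) lt by simp
    moreover have "m' * a j = m * a j + (m' - m) * a j" "m' * a k = m * a k + (m' - m) * a k"
      using lt by (simp_all add: diff_mult_distrib)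
    ultimately have "m' * a j + b j < m' * a k + b k" by linarith
    moreover have "m' * a k + b k \<le> m' * a j + b j"
      using j'(1) k(1) \<open>j' = j\<close> unfolding maxi_def by blast
    ultimately show False by simp
  qed
  have inj_s: "inj_on s (envelope_ties J a b)"
  proof (rule inj_onI, rule ccontr)
    fix m m' assume "m \<in> envelope_ties J a b" "m' \<in> envelope_ties J a b" "s m = s m'" "m \<noteq> m'"
    then show False using overtake[of m m'] overtake[of m' m] by (cases "m < m'") auto
  qed
  have "s m \<in> a ` J - {Max (a ` J)}" if m: "m \<in> envelope_ties J a b" for m
  proof -
    obtain j k where j: "j \<in> maxi m" "a j = s m" and k: "k \<in> maxi m" "s m < a k"
      using tie[OF m] by blast
    have "s m \<in> a ` J" using j unfolding maxi_def by (auto intro: rev_image_eqI)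
    moreover have "a k \<le> Max (a ` J)" using J k(1) unfolding maxi_def by simp
    ultimately show ?thesis using k(2) by simp
  qed
  then have img: "s ` envelope_ties J a b \<subseteq> a ` J - {Max (a ` J)}" by (rule image_subsetI)
  show "finite (envelope_ties J a b)"
    using finite_imageD[OF finite_subset[OF img] inj_s] J by simp
  have "card (envelope_ties J a b) \<le> card (a ` J - {Max (a ` J)})"
    using card_inj_on_le[OF inj_s img] J by simp
  also have "\<dots> = card J - 1"
  proof (cases "J = {}")
    case False
    then show ?thesis using J card_image[OF inj] Max_in[of "a ` J"] by (simp add: card_Diff_singleton)
  qed simp
  finally show "card (envelope_ties J a b) \<le> card J - 1" .
qed

context
  fixes R N :: nat and c :: "nat \<Rightarrow> nat" and h :: "nat \<Rightarrow> nat \<Rightarrow> bit"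
begin

definition active :: "nat set" where
  "active = {j. j < R \<and> (\<exists>k<N. h j k \<noteq> 0)}"

definition last_symbol :: "nat \<Rightarrow> nat" where
  "last_symbol j = Max {k. k < N \<and> h j k \<noteq> 0}"

text \<open>For rows m outside envelope_ties active c last_symbol this is the column of the last
  nonzero entry of row m of delay_code Mt T N c R h.\<close>
definition row_end :: "nat \<Rightarrow> nat" where
  "row_end m = Max ((\<lambda>j. m * c j + last_symbol j) ` active)"

lemma last_symbol_nonzero: "j \<in> active \<Longrightarrow> last_symbol j < N \<and> h j (last_symbol j) \<noteq> 0"
  unfolding active_def last_symbol_def
  using Max_in[of "{k. k < N \<and> h j k \<noteq> 0}"] by auto

lemma le_last_symbol: "k < N \<Longrightarrow> h j k \<noteq> 0 \<Longrightarrow> k \<le> last_symbol j"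
  unfolding last_symbol_def by (rule Max_ge) auto

lemma symbol_le_row_end:
  assumes "j < R" and "k < N" and "h j k \<noteq> 0"
  shows "m * c j + k \<le> row_end m"
proof -
  have "j \<in> active" using assms unfolding active_def by auto
  then have "m * c j + last_symbol j \<le> row_end m"
    unfolding row_end_def by (intro Max_ge) (auto simp: active_def)
  then show ?thesis using le_last_symbol[OF assms(2,3)] by simp
qed

lemma row_end_attained:
  assumes "active \<noteq> {}"
  obtains j where "j \<in> active" and "row_end m = m * c j + last_symbol j"
proof -
  have "row_end m \<in> (\<lambda>j. m * c j + last_symbol j) ` active"
    unfolding row_end_def using assms by (intro Max_in) (auto simp: active_def)
  then show thesis using that by auto
qed

lemma row_end_spread:
  assumes "active \<noteq> {}" and "\<forall>j<R. nu < c j" and "m < m'"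
  shows "row_end m + nu < row_end m'"
proof -
  obtain j where j: "j \<in> active" "row_end m = m * c j + last_symbol j"
    using row_end_attained[OF assms(1)] .
  then have "j < R" using active_def by auto
  then have "m' * c j + last_symbol j \<le> row_end m'"
    using last_symbol_nonzero[OF j(1)] by (intro symbol_le_row_end) auto
  moreover have "m * c j + nu < m' * c j"
  proof -
    have "m * c j + nu < (m + 1) * c j" using assms(2) \<open>j < R\<close> by simp
    also have "\<dots> \<le> m' * c j" using assms(3) by (intro mult_right_mono) auto
    finally show ?thesis .
  qed
  ultimately show ?thesis using j(2) by linarith
qed

lemma row_end_fits:
  assumes "active \<noteq> {}" and "\<forall>j<R. (Mt - 1) * c j + N + nu \<le> T" and "m < Mt"
  shows "row_end m + nu < T"
proof -
  obtain j where j: "j \<in> active" "row_end m = m * c j + last_symbol j"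
    using row_end_attained[OF assms(1)] .
  have "(Mt - 1) * c j + N + nu \<le> T" using assms(2) j(1) unfolding active_def by blast
  moreover have "m * c j \<le> (Mt - 1) * c j" using assms(3) by (intro mult_right_mono) auto
  ultimately show ?thesis using j(2) last_symbol_nonzero[OF j(1)] by linarith
qed

lemma delay_code_after_row_end:
  assumes "m < Mt" and "row_end m < q" and "q < T"
  shows "delay_code Mt T N c R h $$ (m, q) = 0"
proof (rule delay_code_entry_zero[OF assms(1,3)], intro allI impI)
  fix j k assume "j < R" "k < N" "h j k \<noteq> 0"
  then show "m * c j + k \<noteq> q" using symbol_le_row_end[of j k m] assms(2) by linarith
qed

lemma delay_code_at_row_end:
  assumes "active \<noteq> {}" and "m < Mt" and "row_end m < T"
    and no_tie: "m \<notin> envelope_ties active c last_symbol"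
  shows "delay_code Mt T N c R h $$ (m, row_end m) \<noteq> 0"
proof -
  obtain j1 where j1: "j1 \<in> active" "row_end m = m * c j1 + last_symbol j1"
    using row_end_attained[OF assms(1)] .
  have below: "\<forall>i\<in>active. m * c i + last_symbol i \<le> row_end m"
    using symbol_le_row_end last_symbol_nonzero unfolding active_def by auto
  have "m * c j + k \<noteq> row_end m" if "j < R" "j \<noteq> j1" "k < N" "h j k \<noteq> 0" for j k
  proof
    assume eq: "m * c j + k = row_end m"
    have j: "j \<in> active" using that unfolding active_def by auto
    then have "m * c j + last_symbol j = row_end m"
      using below eq le_last_symbol[OF that(3,4)] by (metis add_le_cancel_left antisym)
    then have "j1 \<noteq> j \<and> m * c j1 + last_symbol j1 = m * c j + last_symbol j
        \<and> (\<forall>i\<in>active. m * c i + last_symbol i \<le> m * c j1 + last_symbol j1)"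
      using j1(2) below \<open>j \<noteq> j1\<close> by auto
    then have "m \<in> envelope_ties active c last_symbol"
      unfolding envelope_ties_def using j j1(1) by blast
    then show False using no_tie by contradiction
  qed
  then have "delay_code Mt T N c R h $$ (m, row_end m) = h j1 (last_symbol j1)"
    unfolding j1(2) using assms(2,3) j1 last_symbol_nonzero[OF j1(1)]
    by (intro delay_code_entry_single) (auto simp: active_def)
  then show ?thesis using last_symbol_nonzero[OF j1(1)] by simp
qed

text \<open>Rows whose last entry comes from a single delayed sequence have last nonzero entries
  more than nu apart, and at most R - 1 rows are not of this kind.\<close>
lemma rank_Theta_delay_code:
  assumes "j0 < R" and "k0 < N" and "h j0 k0 \<noteq> 0"
    and c_inj: "inj_on c {..<R}" and c_gt: "\<forall>j<R. nu < c j"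
    and fits: "\<forall>j<R. (Mt - 1) * c j + N + nu \<le> T"
  shows "(Mt + 1 - R) * (nu + 1) \<le> rank_F2 (Theta nu (delay_code Mt T N c R h))"
proof -
  have ne: "active \<noteq> {}" using assms(1-3) unfolding active_def by auto
  have act: "finite active" "active \<subseteq> {..<R}" unfolding active_def by auto
  define S where "S = {..<Mt} - envelope_ties active c last_symbol"
  note ties = envelope_ties_finite_card[OF act(1) inj_on_subset[OF c_inj act(2)], of last_symbol]
  have "0 < card active" "card active \<le> R"
    using ne act card_mono[OF _ act(2)] by (auto simp: card_gt_0_iff)
  then have "Mt + 1 - R \<le> card S"
    unfolding S_def using diff_card_le_card_Diff[OF ties(1), of "{..<Mt}"] ties(2) by simp
  moreover have "(nu + 1) * card S \<le> rank_F2 (Theta nu (delay_code Mt T N c R h))"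
  proof (rule rank_Theta_ge[OF delay_code_carrier, where F = row_end])
    show "S \<subseteq> {..<Mt}" unfolding S_def by blast
    show "\<forall>m\<in>S. \<forall>m'\<in>S. m < m' \<longrightarrow> row_end m + nu < row_end m'"
      using row_end_spread[OF ne c_gt] by blast
    show "\<forall>m\<in>S. delay_code Mt T N c R h $$ (m, row_end m) \<noteq> 0 \<and> row_end m + nu < T
        \<and> (\<forall>q. row_end m < q \<and> q < T \<longrightarrow> delay_code Mt T N c R h $$ (m, q) = 0)"
    proof (intro ballI conjI allI impI)
      fix m assume "m \<in> S"
      then have m: "m < Mt" "m \<notin> envelope_ties active c last_symbol" unfolding S_def by auto
      show fit: "row_end m + nu < T" by (rule row_end_fits[OF ne fits m(1)])
      then show "delay_code Mt T N c R h $$ (m, row_end m) \<noteq> 0"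
        using delay_code_at_row_end[OF ne m(1) _ m(2)] by simp
      fix q assume "row_end m < q \<and> q < T"
      then show "delay_code Mt T N c R h $$ (m, q) = 0"
        using delay_code_after_row_end[OF m(1)] by simp
    qed
  qed
  ultimately show ?thesis by (metis mult.commute mult_le_mono2 le_trans)
qed

end

lemma rank_Theta_diff_delay_code_sets:
  assumes "S \<subseteq> {..<R} \<times> {..<N}" and "S' \<subseteq> {..<R} \<times> {..<N}" and "S \<noteq> S'"
    and "inj_on c {..<R}" and "\<forall>j<R. nu < c j" and "\<forall>j<R. (Mt - 1) * c j + N + nu \<le> T"
  shows "(Mt + 1 - R) * (nu + 1)
    \<le> rank_F2 (Theta nu (delay_code Mt T N c R (\<lambda>j k. of_bool ((j, k) \<in> S)))
               - Theta nu (delay_code Mt T N c R (\<lambda>j k. of_bool ((j, k) \<in> S'))))"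
proof -
  have "\<exists>p. p \<in> S - S' \<union> (S' - S)" using assms(3) by blast
  then obtain j0 k0 where "(j0, k0) \<in> S - S' \<union> (S' - S)" by auto
  then have "j0 < R" "k0 < N" "of_bool ((j0, k0) \<in> S) - of_bool ((j0, k0) \<in> S') \<noteq> (0 :: bit)"
    using assms(1,2) by auto
  from rank_Theta_delay_code[where h = "\<lambda>j k. of_bool ((j, k) \<in> S) - of_bool ((j, k) \<in> S')",
      OF this assms(4-6)] show ?thesis
    by (simp add: Theta_diff[OF delay_code_carrier delay_code_carrier] delay_code_diff)
qed

definition delay_codebook :: "nat \<Rightarrow> nat \<Rightarrow> nat \<Rightarrow> (nat \<Rightarrow> nat) \<Rightarrow> nat \<Rightarrow> bit mat set" where
  "delay_codebook Mt T N c R =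
     (\<lambda>S. delay_code Mt T N c R (\<lambda>j k. of_bool ((j, k) \<in> S))) ` Pow ({..<R} \<times> {..<N})"

lemma delay_codebook_rank_diff:
  assumes "A \<in> delay_codebook Mt T N c R" and "B \<in> delay_codebook Mt T N c R" and "A \<noteq> B"
    and "inj_on c {..<R}" and "\<forall>j<R. nu < c j" and "\<forall>j<R. (Mt - 1) * c j + N + nu \<le> T"
  shows "(Mt + 1 - R) * (nu + 1) \<le> rank_F2 (Theta nu A - Theta nu B)"
  using assms rank_Theta_diff_delay_code_sets[of _ R N _ c nu Mt T] unfolding delay_codebook_def by blast

lemma card_delay_codebook:
  assumes "R \<le> Mt"
    and "inj_on c {..<R}" and "\<forall>j<R. nu < c j" and "\<forall>j<R. (Mt - 1) * c j + N + nu \<le> T"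
  shows "card (delay_codebook Mt T N c R) = 2 ^ (R * N)"
proof -
  let ?enc = "\<lambda>S. delay_code Mt T N c R (\<lambda>j k. of_bool ((j, k) \<in> S))"
  have "inj_on ?enc (Pow ({..<R} \<times> {..<N}))"
  proof (rule inj_onI, rule ccontr)
    fix S S' assume S: "S \<in> Pow ({..<R} \<times> {..<N})" "S' \<in> Pow ({..<R} \<times> {..<N})"
      and eq: "?enc S = ?enc S'" and "S \<noteq> S'"
    have "Theta nu (?enc S') \<in> carrier_mat ((nu + 1) * Mt) T"
      by (rule Theta_carrier[OF delay_code_carrier])
    then have "Theta nu (?enc S) - Theta nu (?enc S') = 0\<^sub>m ((nu + 1) * Mt) T"
      unfolding eq by (rule minus_r_inv_mat)
    then show False
      using rank_Theta_diff_delay_code_sets[OF _ _ \<open>S \<noteq> S'\<close> assms(2-4)] S assms(1) rank_F2_zero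
      by simp
  qed
  then show ?thesis
    unfolding delay_codebook_def by (simp add: card_image card_Pow card_cartesian_product)
qed

lemma linear_delays:
  fixes Mt T N nu R :: nat
  assumes "N + nu + (nu + 1) * (Mt - 1) * R \<le> T"
  defines "c \<equiv> \<lambda>j. (nu + 1) * (j + 1)"
  shows "inj_on c {..<R}" and "\<forall>j<R. nu < c j" and "\<forall>j<R. (Mt - 1) * c j + N + nu \<le> T"
proof -
  show "inj_on c {..<R}"
    unfolding c_def by (intro strict_mono_imp_inj_on strict_monoI mult_strict_left_mono) auto
  show "\<forall>j<R. nu < c j" unfolding c_def by simp
  show "\<forall>j<R. (Mt - 1) * c j + N + nu \<le> T"
  proof (intro allI impI)
    fix j assume "j < R"
    then have "(Mt - 1) * c j \<le> (Mt - 1) * ((nu + 1) * R)"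
      unfolding c_def by (intro mult_le_mono2) simp
    moreover have "(Mt - 1) * ((nu + 1) * R) = (nu + 1) * (Mt - 1) * R" by (simp only: ac_simps)
    ultimately show "(Mt - 1) * c j + N + nu \<le> T" using assms(1) by linarith
  qed
qed

lemma delays_fit_from_length:
  fixes Mt nu R T :: nat
  assumes "1 \<le> R" and "R \<le> Mt"
    and "int T \<ge> (2 ^ R - 1) * int nu
                 + (2 ^ R - 1) * (int nu + 1) * ((int Mt - 2) * (2 ^ R - 1) + int R)"
  shows "nu + (nu + 1) * (Mt - 1) * R \<le> T"
proof -
  have "int R < 2 ^ R" using less_exp[of R] by (metis of_nat_less_iff of_nat_numeral of_nat_power)
  then have R_le: "int R \<le> 2 ^ R - 1" by linarith
  define Y where "Y = (int Mt - 2) * (2 ^ R - 1) + int R"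
  have "(int Mt - 1) * int R \<le> Y"
  proof (cases "Mt = 1")
    case True
    then show ?thesis using assms(1,2) by (simp add: Y_def)
  next
    case False
    then have "(int Mt - 2) * int R \<le> (int Mt - 2) * (2 ^ R - 1)"
      using assms(1,2) R_le by (intro mult_left_mono) auto
    then show ?thesis by (simp add: Y_def algebra_simps)
  qed
  moreover have "0 \<le> (int Mt - 1) * int R" using assms by simp
  ultimately have "(int nu + 1) * ((int Mt - 1) * int R) \<le> (2 ^ R - 1) * ((int nu + 1) * Y)"
    using R_le assms(1) mult_left_mono[of "(int Mt - 1) * int R" Y "int nu + 1"]
      mult_right_mono[of 1 "2 ^ R - 1" "(int nu + 1) * Y"] by simp
  moreover have "int nu \<le> (2 ^ R - 1) * int nu"
    using R_le assms(1) mult_right_mono[of 1 "2 ^ R - 1" "int nu"] by simp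
  ultimately have bound: "int nu + (int nu + 1) * ((int Mt - 1) * int R) \<le> int T"
    using assms(3) unfolding Y_def by (simp add: algebra_simps)
  have "int (Mt - 1) = int Mt - 1" using assms(1,2) by simp
  then have "int (nu + (nu + 1) * (Mt - 1) * R) = int nu + (int nu + 1) * ((int Mt - 1) * int R)"
    by (simp only: of_nat_add of_nat_mult of_nat_1 mult.assoc)
  then show ?thesis using bound by linarith
qed

lemma le_pow2_pred_mult_pow2: "real R \<le> (2 ^ R - 1) * 2 ^ (R - 1)"
proof -
  have "real (R + 1) \<le> real (2 ^ R)" using Suc_leI[OF less_exp[of R]] by (intro of_nat_mono) simp
  then have "real R \<le> (2 ^ R - 1) * 1" by simp
  also have "\<dots> \<le> (2 ^ R - 1) * 2 ^ (R - 1)"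
    using \<open>real R \<le> (2 ^ R - 1) * 1\<close> by (intro mult_left_mono) auto
  finally show ?thesis .
qed

lemma delay_codebook_rate:
  fixes Mt N nu R T :: nat
  assumes "1 \<le> Mt" and "N + nu + (nu + 1) * (Mt - 1) * R = T"
  shows "real R * (real T - real nu - (real nu + 1) * (real Mt - 1) * (2 ^ R - 1) * 2 ^ (R - 1))
    \<le> real R * real N"
proof -
  have "real (Mt - 1) = real Mt - 1" using assms(1) by simp
  then have "real N = real T - real nu - (real nu + 1) * (real Mt - 1) * real R"
    using arg_cong[OF assms(2), of real] by (simp only: of_nat_add of_nat_mult of_nat_1)
  moreover have "(real nu + 1) * (real Mt - 1) * real R
      \<le> (real nu + 1) * (real Mt - 1) * ((2 ^ R - 1) * 2 ^ (R - 1))"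
    using assms(1) by (intro mult_left_mono le_pow2_pred_mult_pow2) auto
  ultimately show ?thesis by (intro mult_left_mono) (auto simp: algebra_simps)
qed

theorem lemma3:
  fixes Mt nu d R T :: nat
  assumes "Mt \<ge> 1" and "1 \<le> d" and "d \<le> Mt" and "R = Mt - d + 1"
    and "int T \<ge> (2 ^ R - 1) * int nu
                 + (2 ^ R - 1) * (int nu + 1) * ((int Mt - 2) * (2 ^ R - 1) + int R)"
  shows "\<exists>P :: bit mat set.
           finite P \<and> P \<noteq> {} \<and>
           (\<forall>B\<in>P. B \<in> carrier_mat Mt T \<and>
                   (\<forall>i<Mt. \<forall>j. T - nu \<le> j \<and> j < T \<longrightarrow> B $$ (i, j) = 0)) \<and>
           (\<forall>A\<in>P. \<forall>B\<in>P. A \<noteq> B \<longrightarrow> rank_F2 (Theta nu A - Theta nu B) \<ge> d * (nu + 1)) \<and>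
           log 2 (real (card P)) \<ge>
             real R * (real T - real nu
                       - (real nu + 1) * (real Mt - 1) * (2 ^ R - 1) * 2 ^ (R - 1))"
proof -
  have R: "1 \<le> R" "R \<le> Mt" and d: "d = Mt + 1 - R" using assms(1-4) by auto
  define N where "N = T - nu - (nu + 1) * (Mt - 1) * R"
  define P where "P = delay_codebook Mt T N (\<lambda>j. (nu + 1) * (j + 1)) R"
  have T: "N + nu + (nu + 1) * (Mt - 1) * R = T"
    using delays_fit_from_length[OF R assms(5)] unfolding N_def by simp
  then have "N + nu + (nu + 1) * (Mt - 1) * R \<le> T" by simp
  note c = linear_delays[OF this]
  have "log 2 (real (card P)) = real R * real N"
    unfolding P_def card_delay_codebook[OF R(2) c] by (simp add: log_nat_power)
  moreover have "B \<in> carrier_mat Mt T \<and> (\<forall>i<Mt. \<forall>j. T - nu \<le> j \<and> j < T \<longrightarrow> B $$ (i, j) = 0)"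
    if "B \<in> P" for B
    using that delay_code_carrier delay_code_last_cols_zero[OF c(3)]
    unfolding P_def delay_codebook_def by blast
  moreover have "finite P" "P \<noteq> {}" unfolding P_def delay_codebook_def by auto
  ultimately show ?thesis
    using delay_codebook_rank_diff[OF _ _ _ c] delay_codebook_rate[OF assms(1) T]
    unfolding d P_def by (intro exI[of _ P]) (auto simp: P_def)
qed

end
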